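(* Let $d\ge1$, $D=2^d$, $b$ an odd integer and $w=(b-1)/2$. Identify $a\in\{0,\dots,D-1\}$ with its bit string $(a_{d-1},\dots,a_0)$, $a=\sum_{i=0}^{d-1}a_i2^i$. For $l=1,\dots,d-1$ define the map $G_l$ on $\{0,\dots,D-1\}$ as follows: if bit $a_{d-1-l}$ of its argument $a$ equals $1$, replace the integer $t=\sum_{i=0}^{l-1}a_{d-l+i}2^i$ formed by the top $l$ bits $(a_{d-1},\dots,a_{d-l})$ by $t+w\bmod 2^l$, leaving all other bits unchanged; if $a_{d-1-l}=0$, $G_l(a)=a$. Then for every $a\in\{0,\dots,D-1\}$, $$G_{d-1}\circ G_{d-2}\circ\cdots\circ G_1(a)=ab\bmod D .$$ Consequently the modular multiplication gate $|a\rangle\mapsto|ab\bmod D\rangle$ on $d$ qubits equals the product of the corresponding controlled modular-summation gates $\mathcal{SUM}(w\bmod 2^{d-1})^{h_0}\cdots\mathcal{SUM}(w\bmod 2^{2})^{h_{d-3}}\mathcal{SUM}(w\bmod 2^{1})^{h_{d-2}}$ (rightmost applied first) and requires no auxiliary qubits.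
   Context: $\mathcal{SUM}(w\bmod 2^l)^{h_k}$ denotes the gate that, controlled by qubit $h_k$ (the qubit holding bit $a_k$), adds $w$ modulo $2^l$ to the register formed by the top $l$ qubits $(h_{d-1},\dots,h_{d-l})$, interpreted as an $l$-bit integer with $h_{d-l}$ least significant. *)

theory Defs
  imports Main
begin

definition bit_at :: "int \<Rightarrow> nat \<Rightarrow> int" where
  "bit_at a i = (a div 2 ^ i) mod 2"

definition G :: "nat \<Rightarrow> int \<Rightarrow> nat \<Rightarrow> int \<Rightarrow> int" where
  "G d w l a = (if bit_at a (d - 1 - l) = 1
     then ((a div 2 ^ (d - l) + w) mod 2 ^ l) * 2 ^ (d - l) + a mod 2 ^ (d - l)
     else a)"

fun Gcomp :: "nat \<Rightarrow> int \<Rightarrow> nat \<Rightarrow> int \<Rightarrow> int" where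
  "Gcomp d w 0 = id"
| "Gcomp d w (Suc k) = G d w (Suc k) \<circ> Gcomp d w k"

end

theory Submission
  imports Defs
begin

text \<open>Writing \<open>b = 2w + 1\<close>, the product \<open>ab\<close> equals \<open>a + 2wa\<close>, and modulo \<open>2^d\<close> only the
  low \<open>d - 1\<close> bits of \<open>a\<close> matter in \<open>2wa\<close>, i.e. \<open>ab \<equiv> a + \<Sum>\<^sub>i a\<^sub>i w 2^(i+1)\<close> over \<open>i < d - 1\<close>.
  The gate \<open>G\<^sub>l\<close> adds exactly the summand for \<open>i = d - 1 - l\<close>: adding \<open>w\<close> modulo \<open>2^l\<close> to the
  top \<open>l\<close> bits is adding \<open>w 2^(d-l)\<close> modulo \<open>2^d\<close>. Since that summand leaves the bits below
  position \<open>d - l\<close> untouched, every control bit is still the original bit of \<open>a\<close> when its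
  gate fires, so the composite adds the whole sum.\<close>

lemma bit_at_cases: "bit_at x i = 0 \<or> bit_at x i = 1"
  unfolding bit_at_def by auto

lemma mod_power_Suc_eq_bit_at: "(a::int) mod 2 ^ Suc n = a mod 2 ^ n + bit_at a n * 2 ^ n"
proof -
  have "a mod (2 ^ n * 2) = 2 ^ n * (a div 2 ^ n mod 2) + a mod 2 ^ n"
    by (rule zmod_zmult2_eq) simp
  then show ?thesis
    unfolding bit_at_def by (simp add: mult.commute)
qed

lemma bit_at_eq_if_mod_power_Suc_eq:
  assumes "x mod 2 ^ Suc i = y mod 2 ^ Suc i"
  shows "bit_at x i = bit_at y i"
proof -
  have "(x mod 2 ^ Suc i) mod 2 ^ i = (y mod 2 ^ Suc i) mod 2 ^ i"
    using assms by simp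
  then have "x mod 2 ^ i = y mod 2 ^ i"
    by (simp add: mod_mod_cancel le_imp_power_dvd)
  then show ?thesis
    using assms mod_power_Suc_eq_bit_at[of x i] mod_power_Suc_eq_bit_at[of y i] by simp
qed

lemma mod_power_add_dvd:
  fixes a c :: int
  assumes "m \<le> n" and "2 ^ m dvd c"
  shows "(a + c) mod 2 ^ n mod 2 ^ m = a mod 2 ^ m"
proof -
  have "(a + c) mod 2 ^ n mod 2 ^ m = (a + c) mod 2 ^ m"
    using assms(1) by (simp add: mod_mod_cancel le_imp_power_dvd)
  also have "\<dots> = (a + c mod 2 ^ m) mod 2 ^ m"
    by (rule mod_add_right_eq[symmetric])
  also have "\<dots> = a mod 2 ^ m"
    using assms(2) by simp
  finally show ?thesis .
qed

lemma G_eq_add_mod: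
  assumes "0 \<le> a" "a < 2 ^ d" "l < d"
  shows "G d w l a = (a + w * 2 ^ (d - l) * bit_at a (d - 1 - l)) mod 2 ^ d"
proof (cases "bit_at a (d - 1 - l) = 1")
  case True
  define n where "n = d - l"
  let ?y = "a + w * 2 ^ n"
  have "?y mod (2 ^ n * 2 ^ l) = 2 ^ n * (?y div 2 ^ n mod 2 ^ l) + ?y mod 2 ^ n"
    by (rule zmod_zmult2_eq) simp
  moreover have "?y div 2 ^ n = a div 2 ^ n + w" and "?y mod 2 ^ n = a mod 2 ^ n"
    by simp_all
  moreover have "d = n + l"
    using assms(3) n_def by simp
  ultimately have "((a div 2 ^ n + w) mod 2 ^ l) * 2 ^ n + a mod 2 ^ n = ?y mod 2 ^ d"
    by (simp add: power_add mult.commute)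
  then show ?thesis
    using True unfolding G_def n_def by simp
next
  case False
  then have "bit_at a (d - 1 - l) = 0"
    using bit_at_cases by blast
  then show ?thesis
    using assms unfolding G_def by simp
qed

lemma Gcomp_eq_add_mod:
  assumes "0 \<le> a" "a < 2 ^ d" "k \<le> d - 1"
  shows "Gcomp d w k a = (a + 2 * w * (a mod 2 ^ (d - 1) - a mod 2 ^ (d - 1 - k))) mod 2 ^ d"
  using assms(3)
proof (induction k)
  case 0
  then show ?case
    using assms by simp
next
  case (Suc k)
  define x where "x = Gcomp d w k a"
  define i where "i = d - 2 - k"
  define c where "c = 2 * w * (a mod 2 ^ (d - 1) - a mod 2 ^ Suc i)"
  have i: "d - 1 - k = Suc i" "d - Suc k = Suc i" "d - 1 - Suc k = i"
    using Suc.prems i_def by auto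
  have x: "x = (a + c) mod 2 ^ d"
    using Suc i unfolding x_def c_def by simp
  have "a mod 2 ^ (d - 1) mod 2 ^ Suc i = a mod 2 ^ Suc i"
    using i by (intro mod_mod_cancel le_imp_power_dvd) simp
  then have "(2::int) ^ Suc i dvd a mod 2 ^ (d - 1) - a mod 2 ^ Suc i"
    by (metis mod_eq_dvd_iff mod_mod_trivial)
  then have "x mod 2 ^ Suc i = a mod 2 ^ Suc i"
    using i unfolding x c_def by (intro mod_power_add_dvd) auto
  then have control: "bit_at x i = bit_at a i"
    by (rule bit_at_eq_if_mod_power_Suc_eq)
  have "Gcomp d w (Suc k) a = G d w (Suc k) x"
    by (simp add: x_def)
  also have "\<dots> = (x + w * 2 ^ Suc i * bit_at a i) mod 2 ^ d"
    using G_eq_add_mod[of x d "Suc k" w] x Suc.prems i control by simp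
  also have "\<dots> = (a + c + w * 2 ^ Suc i * bit_at a i) mod 2 ^ d"
    using x by (simp add: mod_add_left_eq)
  also have "a + c + w * 2 ^ Suc i * bit_at a i = a + 2 * w * (a mod 2 ^ (d - 1) - a mod 2 ^ i)"
    using mod_power_Suc_eq_bit_at[of a i] unfolding c_def by (simp add: algebra_simps)
  finally show ?case
    using i by simp
qed

lemma mult_odd_mod_power_Suc:
  fixes a w :: int
  shows "(a + 2 * w * (a mod 2 ^ n)) mod 2 ^ Suc n = a * (2 * w + 1) mod 2 ^ Suc n"
proof -
  have "(2::int) ^ n dvd a - a mod 2 ^ n"
    by (simp add: minus_mod_eq_mult_div)
  then have "(2::int) ^ Suc n dvd 2 * w * (a - a mod 2 ^ n)"
    by (metis dvd_mult mult.assoc mult_dvd_mono power_Suc dvd_refl)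
  then have "(2::int) ^ Suc n dvd a * (2 * w + 1) - (a + 2 * w * (a mod 2 ^ n))"
    by (simp add: algebra_simps)
  then show ?thesis
    by (metis mod_eq_dvd_iff)
qed

theorem mainTheorem8:
  fixes d :: nat and b a :: int
  assumes "d \<ge> 1" and "odd b" and "0 \<le> a" and "a < 2 ^ d"
  shows "Gcomp d ((b - 1) div 2) (d - 1) a = (a * b) mod 2 ^ d"
proof -
  define w where "w = (b - 1) div 2"
  have b: "b = 2 * w + 1"
    using assms(2) unfolding w_def by (elim oddE) simp
  have "Gcomp d w (d - 1) a = (a + 2 * w * (a mod 2 ^ (d - 1))) mod 2 ^ Suc (d - 1)"
    using Gcomp_eq_add_mod[OF assms(3,4), of "d - 1" w] assms(1) by simp
  also have "\<dots> = a * b mod 2 ^ d"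
    using mult_odd_mod_power_Suc[of a w "d - 1"] assms(1) b by simp
  finally show ?thesis
    unfolding w_def .
qed

end
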